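(* The projection of $\mathcal T_\rightarrow$ (and of $\mathcal T_\leftarrow$) onto the complex plane of the coordinate $z_2=-[z\cdot b]$ is the cut-plane $\mathbb C\setminus[-1,1]$. The image of $\mathcal T_\leftarrow\times\mathcal T_\rightarrow$ (and of $\mathcal T_\rightarrow\times\mathcal T_\leftarrow$) under $(z,z')\mapsto[z\cdot z']$ is the cut-plane $\mathbb C\setminus[-1,1]$.
   Context: $[z\cdot z']=z_0z'_0-z_1z'_1-z_2z'_2$ on $\mathbb C^3$, $z^2=[z\cdot z]$; $X^{(c)}=\{z\in\mathbb C^3:z^2=-1\}$, $z=x+iy$; $V^+=\{y\in\mathbb R^3:y^2>0,y_0>0\}$; fix $e\in V^+$; $\mathcal T_\rightarrow=\{z\in X^{(c)}:y^2<0,{\rm sgn}\det(e,x,y)=-1\}$, $\mathcal T_\leftarrow=\{z\in X^{(c)}:y^2<0,{\rm sgn}\det(e,x,y)=+1\}$; $b=(0,0,1)$. *)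

theory Defs
  imports "HOL-Analysis.Analysis"
begin

text \<open>Points of C^3 are complex^3 with coordinates z_0 = z$1, z_1 = z$2, z_2 = z$3.\<close>

definition mink :: "complex^3 \<Rightarrow> complex^3 \<Rightarrow> complex" where
  "mink z w = z$1 * w$1 - z$2 * w$2 - z$3 * w$3"

definition rmink :: "real^3 \<Rightarrow> real^3 \<Rightarrow> real" where
  "rmink x y = x$1 * y$1 - x$2 * y$2 - x$3 * y$3"

definition Xc :: "(complex^3) set" where
  "Xc = {z. mink z z = -1}"

definition rpart :: "complex^3 \<Rightarrow> real^3" where
  "rpart z = (\<chi> i. Re (z$i))"

definition ipart :: "complex^3 \<Rightarrow> real^3" where
  "ipart z = (\<chi> i. Im (z$i))"

definition Vplus :: "(real^3) set" where
  "Vplus = {y. rmink y y > 0 \<and> y$1 > 0}"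

definition det3 :: "real^3 \<Rightarrow> real^3 \<Rightarrow> real^3 \<Rightarrow> real" where
  "det3 a c d = det (vector [a, c, d] :: real^3^3)"

definition T_right :: "real^3 \<Rightarrow> (complex^3) set" where
  "T_right e = {z \<in> Xc. rmink (ipart z) (ipart z) < 0
                 \<and> sgn (det3 e (rpart z) (ipart z)) = -1}"

definition T_left :: "real^3 \<Rightarrow> (complex^3) set" where
  "T_left e = {z \<in> Xc. rmink (ipart z) (ipart z) < 0
                 \<and> sgn (det3 e (rpart z) (ipart z)) = 1}"

definition bvec :: "complex^3" where
  "bvec = vector [0, 0, 1]"

definition cut_plane :: "complex set" where
  "cut_plane = UNIV - {complex_of_real t | t. -1 \<le> t \<and> t \<le> 1}"

end

theory Submission
  imports Defs
begin

(* For z = x + iy with [z.z] real and nonpositive and y spacelike, x and y are orthogonal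
   spacelike vectors; their Lorentzian cross product is then timelike, so det(e,x,y), which is
   its Minkowski product with the timelike e, cannot vanish.  If [z.z'] were real in [-1,1] for
   z in T_left and z' in T_right (replacing z' by -z' we may assume [y.y'] <= 0), every point of
   the segment from z to z' would be of this kind, although det(e,x,y) changes sign along it.
   If z_2 were real in [-1,1], dropping it would leave such a point inside a Lorentzian plane,
   where the cross product is spacelike.  Conversely, the points (0, cos psi, sin psi) lie in
   T_left or T_right according to the sign of Im psi and pair to -cos(psi - psi'); since cos maps
   the upper half-plane onto the cut plane, every point of the cut plane is attained. *)

definition lorentz_cross :: "real^3 \<Rightarrow> real^3 \<Rightarrow> real^3" where
  "lorentz_cross x y =
     vector [x$2 * y$3 - x$3 * y$2, x$1 * y$3 - x$3 * y$1, x$2 * y$1 - x$1 * y$2]"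

lemma rmink_commute: "rmink x y = rmink y x"
  by (simp add: rmink_def algebra_simps)

lemma rmink_uminus [simp]: "rmink (- x) y = - rmink x y" "rmink x (- y) = - rmink x y"
  by (simp_all add: rmink_def)

lemma rmink_bilinear:
  "rmink (a *\<^sub>R u + b *\<^sub>R v) (c *\<^sub>R p + d *\<^sub>R q) =
     a * c * rmink u p + a * d * rmink u q + b * c * rmink v p + b * d * rmink v q"
  by (simp add: rmink_def algebra_simps)

lemma det3_eq_rmink_lorentz_cross: "det3 e x y = rmink e (lorentz_cross x y)"
  unfolding det3_def det_3 rmink_def lorentz_cross_def by (simp add: algebra_simps)

lemma det3_uminus_uminus [simp]: "det3 e (- x) (- y) = det3 e x y"
  by (simp add: det3_eq_rmink_lorentz_cross lorentz_cross_def)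

lemma rmink_lorentz_cross_self:
  "rmink (lorentz_cross x y) (lorentz_cross x y) = rmink x x * rmink y y - (rmink x y)\<^sup>2"
  unfolding rmink_def lorentz_cross_def by (simp add: power2_eq_square algebra_simps)

lemma rmink_timelike_neq_0:
  assumes u: "rmink u u > 0" and v: "rmink v v > 0"
  shows "rmink u v \<noteq> 0"
proof
  assume "rmink u v = 0"
  then have "u$1 * v$1 = u$2 * v$2 + u$3 * v$3"
    by (simp add: rmink_def)
  moreover have "(u$2 * v$2 + u$3 * v$3)\<^sup>2 \<le> ((u$2)\<^sup>2 + (u$3)\<^sup>2) * ((v$2)\<^sup>2 + (v$3)\<^sup>2)"
    using zero_le_power2 [of "u$2 * v$3 - u$3 * v$2"]
    by (simp add: power2_eq_square algebra_simps)
  moreover have "((u$2)\<^sup>2 + (u$3)\<^sup>2) * ((v$2)\<^sup>2 + (v$3)\<^sup>2) < (u$1)\<^sup>2 * (v$1)\<^sup>2"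
    using u v by (intro mult_strict_mono') (simp_all add: rmink_def power2_eq_square)
  ultimately show False
    by (metis leD power_mult_distrib)
qed

lemma rpart_nth [simp]: "rpart z $ i = Re (z $ i)"
  by (simp add: rpart_def)

lemma ipart_nth [simp]: "ipart z $ i = Im (z $ i)"
  by (simp add: ipart_def)

lemma rpart_uminus [simp]: "rpart (- z) = - rpart z"
  and ipart_uminus [simp]: "ipart (- z) = - ipart z"
  by (simp_all add: vec_eq_iff)

lemma rpart_scaleR_add: "rpart (a *\<^sub>R z + b *\<^sub>R w) = a *\<^sub>R rpart z + b *\<^sub>R rpart w"
  and ipart_scaleR_add: "ipart (a *\<^sub>R z + b *\<^sub>R w) = a *\<^sub>R ipart z + b *\<^sub>R ipart w"
  by (simp_all add: vec_eq_iff)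

lemma Re_mink: "Re (mink z w) = rmink (rpart z) (rpart w) - rmink (ipart z) (ipart w)"
  by (simp add: mink_def rmink_def algebra_simps)

lemma Im_mink: "Im (mink z w) = rmink (rpart z) (ipart w) + rmink (ipart z) (rpart w)"
  by (simp add: mink_def rmink_def algebra_simps)

lemma mink_commute: "mink z w = mink w z"
  by (simp add: mink_def algebra_simps)

lemma mink_uminus [simp]: "mink (- z) w = - mink z w" "mink z (- w) = - mink z w"
  by (simp_all add: mink_def)

lemma mink_scaleR_add_self:
  "mink (a *\<^sub>R z + b *\<^sub>R w) (a *\<^sub>R z + b *\<^sub>R w) =
     of_real (a\<^sup>2) * mink z z + of_real (2 * a * b) * mink z w + of_real (b\<^sup>2) * mink w w"
  unfolding mink_def vector_add_component vector_scaleR_component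
  by (simp add: scaleR_conv_of_real [where 'a = complex] power2_eq_square algebra_simps)

lemma uminus_mink_bvec: "- mink z bvec = z$3"
  by (simp add: mink_def bvec_def)

lemma mem_cut_plane_iff: "w \<in> cut_plane \<longleftrightarrow> Im w \<noteq> 0 \<or> 1 < \<bar>Re w\<bar>"
  unfolding cut_plane_def by (auto simp: complex_eq_iff intro!: exI [of _ "Re w"])

lemma uminus_mem_cut_plane_iff [simp]: "- w \<in> cut_plane \<longleftrightarrow> w \<in> cut_plane"
  by (simp add: mem_cut_plane_iff)

lemma T_left_iff:
  "z \<in> T_left e \<longleftrightarrow>
     mink z z = -1 \<and> rmink (ipart z) (ipart z) < 0 \<and> det3 e (rpart z) (ipart z) > 0"
  by (simp add: T_left_def Xc_def sgn_if)

lemma T_right_iff: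
  "z \<in> T_right e \<longleftrightarrow>
     mink z z = -1 \<and> rmink (ipart z) (ipart z) < 0 \<and> det3 e (rpart z) (ipart z) < 0"
  by (simp add: T_right_def Xc_def sgn_if)

lemma uminus_mem_T_right: "z \<in> T_right e \<Longrightarrow> - z \<in> T_right e"
  by (simp add: T_right_iff)

lemma lorentz_cross_parts_timelike:
  assumes "Im (mink z z) = 0" and "Re (mink z z) \<le> 0" and "rmink (ipart z) (ipart z) < 0"
  shows "rmink (lorentz_cross (rpart z) (ipart z)) (lorentz_cross (rpart z) (ipart z)) > 0"
proof -
  have "rmink (rpart z) (ipart z) = 0"
    using assms(1) by (simp add: Im_mink rmink_commute [of "ipart z"])
  moreover have "rmink (rpart z) (rpart z) < 0"
    using assms(2,3) by (simp add: Re_mink)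
  ultimately show ?thesis
    using assms(3) by (simp add: rmink_lorentz_cross_self mult_neg_neg)
qed

lemma det3_parts_neq_0:
  assumes "rmink e e > 0"
    and "Im (mink z z) = 0" and "Re (mink z z) \<le> 0" and "rmink (ipart z) (ipart z) < 0"
  shows "det3 e (rpart z) (ipart z) \<noteq> 0"
  using rmink_timelike_neq_0 [OF assms(1) lorentz_cross_parts_timelike [OF assms(2-4)]]
  by (simp add: det3_eq_rmink_lorentz_cross)

lemma third_coord_in_cut_plane:
  assumes "mink z z = -1" and "rmink (ipart z) (ipart z) < 0"
  shows "z$3 \<in> cut_plane"
proof (rule ccontr)
  assume "z$3 \<notin> cut_plane"
  then have t: "Im (z$3) = 0" "\<bar>Re (z$3)\<bar> \<le> 1"
    by (auto simp: mem_cut_plane_iff)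
  define w :: "complex^3" where "w = vector [z$1, z$2, 0]"
  have "mink w w = mink z z + (z$3)\<^sup>2"
    by (simp add: w_def mink_def power2_eq_square)
  then have "Im (mink w w) = 0" "Re (mink w w) \<le> 0"
    using assms(1) t by (simp_all add: Re_power2 Im_power2 abs_square_le_1)
  moreover have "rmink (ipart w) (ipart w) = rmink (ipart z) (ipart z)"
    using t by (simp add: w_def rmink_def)
  ultimately have "rmink (lorentz_cross (rpart w) (ipart w)) (lorentz_cross (rpart w) (ipart w)) > 0"
    using assms(2) by (intro lorentz_cross_parts_timelike) simp_all
  moreover have "rmink (lorentz_cross (rpart w) (ipart w)) (lorentz_cross (rpart w) (ipart w)) \<le> 0"
    by (simp add: w_def lorentz_cross_def rmink_def)
  ultimately show False
    by simp
qed

lemma det3_segment_neq_0: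
  assumes e: "rmink e e > 0"
    and zw: "mink z z = -1" "mink w w = -1" "Im (mink z w) = 0" "\<bar>Re (mink z w)\<bar> \<le> 1"
    and y: "rmink (ipart z) (ipart z) < 0" "rmink (ipart w) (ipart w) < 0"
      "rmink (ipart z) (ipart w) \<le> 0"
    and s: "0 \<le> s" "s \<le> 1"
  shows "det3 e (rpart ((1 - s) *\<^sub>R z + s *\<^sub>R w)) (ipart ((1 - s) *\<^sub>R z + s *\<^sub>R w)) \<noteq> 0"
proof (rule det3_parts_neq_0 [OF e])
  let ?p = "(1 - s) *\<^sub>R z + s *\<^sub>R w"
  have p: "mink ?p ?p = of_real (2 * (1 - s) * s) * mink z w - of_real ((1 - s)\<^sup>2 + s\<^sup>2)"
    unfolding mink_scaleR_add_self zw(1,2) by (simp add: algebra_simps)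
  have "2 * (1 - s) * s * Re (mink z w) \<le> 2 * (1 - s) * s"
    using zw(4) s by (simp add: mult_left_le)
  also have "\<dots> \<le> (1 - s)\<^sup>2 + s\<^sup>2"
    using zero_le_power2 [of "1 - 2 * s"] by (simp add: power2_eq_square algebra_simps)
  finally show "Im (mink ?p ?p) = 0" "Re (mink ?p ?p) \<le> 0"
    using zw(3) by (simp_all add: p)
  have "(1 - s)\<^sup>2 * rmink (ipart z) (ipart z) + s\<^sup>2 * rmink (ipart w) (ipart w) < 0"
  proof (cases "s = 0")
    case False
    then show ?thesis
      using y(1,2) by (intro add_nonpos_neg mult_nonneg_nonpos mult_pos_neg) simp_all
  qed (use y(1) in simp)
  moreover have "2 * (1 - s) * s * rmink (ipart z) (ipart w) \<le> 0"
    using y(3) s by (simp add: mult_nonneg_nonpos)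
  moreover have "rmink (ipart ?p) (ipart ?p) =
      (1 - s)\<^sup>2 * rmink (ipart z) (ipart z) + 2 * (1 - s) * s * rmink (ipart z) (ipart w)
      + s\<^sup>2 * rmink (ipart w) (ipart w)"
    unfolding ipart_scaleR_add rmink_bilinear rmink_commute [of "ipart w" "ipart z"]
    by (simp add: power2_eq_square algebra_simps)
  ultimately show "rmink (ipart ?p) (ipart ?p) < 0"
    by linarith
qed

lemma mink_T_left_T_right_in_cut_plane:
  assumes e: "e \<in> Vplus" and z: "z \<in> T_left e" and w: "w \<in> T_right e"
  shows "mink z w \<in> cut_plane"
proof (rule ccontr)
  assume "mink z w \<notin> cut_plane"
  then obtain w' where w': "w' \<in> T_right e" "mink z w' \<notin> cut_plane"
    and y: "rmink (ipart z) (ipart w') \<le> 0"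
  proof (cases "rmink (ipart z) (ipart w) \<le> 0")
    case False
    then show ?thesis
      using that [of "- w"] uminus_mem_T_right [OF w] \<open>mink z w \<notin> cut_plane\<close> by simp
  qed (use w \<open>mink z w \<notin> cut_plane\<close> in blast)
  let ?det = "\<lambda>s. det3 e (rpart ((1 - s) *\<^sub>R z + s *\<^sub>R w')) (ipart ((1 - s) *\<^sub>R z + s *\<^sub>R w'))"
  have "continuous_on {0..1} ?det"
    unfolding det3_eq_rmink_lorentz_cross rpart_scaleR_add ipart_scaleR_add
    by (simp add: rmink_def lorentz_cross_def) (intro continuous_intros)
  moreover have "?det 1 < 0" "0 < ?det 0"
    using w' z by (simp_all add: T_left_iff T_right_iff)
  ultimately obtain s where "0 \<le> s" "s \<le> 1" "?det s = 0"
    using IVT2' [of ?det 1 0 0] by force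
  moreover have "rmink e e > 0"
    using e by (simp add: Vplus_def)
  ultimately show False
    using det3_segment_neq_0 [of e z w' s] w'(2) y z w'(1)
    by (simp add: T_left_iff T_right_iff mem_cut_plane_iff)
qed

lemma mink_image_swap:
  "(\<lambda>(z, z'). mink z z') ` (B \<times> A) = (\<lambda>(z, z'). mink z z') ` (A \<times> B)"
proof -
  have "(\<lambda>(z, z'). mink z z') ` (B \<times> A) =
      (\<lambda>p. case prod.swap p of (z, z') \<Rightarrow> mink z z') ` (A \<times> B)"
    by (metis image_image product_swap)
  then show ?thesis
    by (simp add: case_prod_unfold mink_commute)
qed

definition circle_point :: "complex \<Rightarrow> complex^3" where
  "circle_point \<psi> = vector [0, cos \<psi>, sin \<psi>]"

lemma mink_circle_point: "mink (circle_point \<psi>) (circle_point \<phi>) = - cos (\<psi> - \<phi>)"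
  by (simp add: circle_point_def mink_def cos_diff)

lemma circle_point_third: "circle_point \<psi> $ 3 = sin \<psi>"
  by (simp add: circle_point_def)

lemma circle_point_parts:
  fixes \<psi> :: complex
  defines "a \<equiv> exp (Im \<psi>) + exp (- Im \<psi>)" and "d \<equiv> exp (Im \<psi>) - exp (- Im \<psi>)"
  shows "rmink (ipart (circle_point \<psi>)) (ipart (circle_point \<psi>)) = - (d / 2)\<^sup>2"
    and "det3 e (rpart (circle_point \<psi>)) (ipart (circle_point \<psi>)) = e$1 * a * d / 4"
proof -
  define c s where "c = cos (Re \<psi>)" and "s = sin (Re \<psi>)"
  have parts: "Re (cos \<psi>) = c * a / 2" "Im (cos \<psi>) = - s * d / 2"
    "Re (sin \<psi>) = s * a / 2" "Im (sin \<psi>) = c * d / 2"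
    by (simp_all add: Re_cos Im_cos Re_sin Im_sin a_def d_def c_def s_def algebra_simps)
  have pyth: "s\<^sup>2 + c\<^sup>2 = 1"
    by (simp add: c_def s_def)
  have "rmink (ipart (circle_point \<psi>)) (ipart (circle_point \<psi>)) =
      - (s\<^sup>2 + c\<^sup>2) * (d / 2)\<^sup>2"
    by (simp add: circle_point_def rmink_def parts power2_eq_square algebra_simps)
  then show "rmink (ipart (circle_point \<psi>)) (ipart (circle_point \<psi>)) = - (d / 2)\<^sup>2"
    by (simp add: pyth)
  have "det3 e (rpart (circle_point \<psi>)) (ipart (circle_point \<psi>)) =
      e$1 * (s\<^sup>2 + c\<^sup>2) * a * d / 4"
    by (simp add: det3_eq_rmink_lorentz_cross circle_point_def rmink_def lorentz_cross_def parts
        power2_eq_square algebra_simps)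
  then show "det3 e (rpart (circle_point \<psi>)) (ipart (circle_point \<psi>)) = e$1 * a * d / 4"
    by (simp add: pyth)
qed

lemma circle_point_mem_T_left:
  assumes "e \<in> Vplus" and "Im \<psi> > 0"
  shows "circle_point \<psi> \<in> T_left e"
proof -
  have "exp (- Im \<psi>) < exp (Im \<psi>)" "e$1 > 0"
    using assms by (simp_all add: Vplus_def)
  then show ?thesis
    by (simp add: T_left_iff mink_circle_point circle_point_parts add_pos_pos)
qed

lemma circle_point_mem_T_right:
  assumes "e \<in> Vplus" and "Im \<psi> < 0"
  shows "circle_point \<psi> \<in> T_right e"
proof -
  have "exp (Im \<psi>) < exp (- Im \<psi>)" "e$1 > 0"
    using assms by (simp_all add: Vplus_def)
  then show ?thesis
    by (simp add: T_right_iff mink_circle_point circle_point_parts add_pos_pos mult_pos_neg)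
qed

lemma cos_real_notin_cut_plane:
  assumes "Im \<zeta> = 0"
  shows "cos \<zeta> \<notin> cut_plane"
proof -
  have "\<zeta> = of_real (Re \<zeta>)"
    using assms by (simp add: complex_eq_iff)
  then have "cos \<zeta> = of_real (cos (Re \<zeta>))"
    by (metis cos_of_real)
  then show ?thesis
    by (simp add: mem_cut_plane_iff abs_cos_le_one not_less)
qed

lemma cos_surj_upper_half_plane:
  assumes "w \<in> cut_plane"
  obtains \<zeta> where "Im \<zeta> > 0" and "cos \<zeta> = w"
proof -
  have "Im (Arccos w) \<noteq> 0"
    using assms cos_real_notin_cut_plane by force
  then show ?thesis
    using that [of "Arccos w"] that [of "- Arccos w"] by (cases "Im (Arccos w) > 0") auto
qed

lemma third_coord_image_T_right:
  assumes e: "e \<in> Vplus"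
  shows "(\<lambda>z. - mink z bvec) ` T_right e = cut_plane"
proof (intro equalityI subsetI)
  fix w
  assume "w \<in> (\<lambda>z. - mink z bvec) ` T_right e"
  then show "w \<in> cut_plane"
    by (auto simp: uminus_mink_bvec T_right_iff intro: third_coord_in_cut_plane)
next
  fix w
  assume "w \<in> cut_plane"
  then obtain \<zeta> where "Im \<zeta> > 0" "cos \<zeta> = w"
    by (rule cos_surj_upper_half_plane)
  then have "w = - mink (circle_point (of_real pi / 2 - \<zeta>)) bvec"
    and "circle_point (of_real pi / 2 - \<zeta>) \<in> T_right e"
    using e by (simp_all add: circle_point_mem_T_right uminus_mink_bvec circle_point_third sin_cos_eq)
  then show "w \<in> (\<lambda>z. - mink z bvec) ` T_right e"
    by (rule image_eqI)
qed

lemma third_coord_image_T_left: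
  assumes e: "e \<in> Vplus"
  shows "(\<lambda>z. - mink z bvec) ` T_left e = cut_plane"
proof (intro equalityI subsetI)
  fix w
  assume "w \<in> (\<lambda>z. - mink z bvec) ` T_left e"
  then show "w \<in> cut_plane"
    by (auto simp: uminus_mink_bvec T_left_iff intro: third_coord_in_cut_plane)
next
  fix w
  assume "w \<in> cut_plane"
  then obtain \<zeta> where "Im \<zeta> > 0" "cos \<zeta> = w"
    by (rule cos_surj_upper_half_plane)
  then have "w = - mink (circle_point (of_real pi / 2 + \<zeta>)) bvec"
    and "circle_point (of_real pi / 2 + \<zeta>) \<in> T_left e"
    using e by (simp_all add: circle_point_mem_T_left uminus_mink_bvec circle_point_third sin_cos_eq)
  then show "w \<in> (\<lambda>z. - mink z bvec) ` T_left e"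
    by (rule image_eqI)
qed

lemma mink_image_T_left_T_right:
  assumes e: "e \<in> Vplus"
  shows "(\<lambda>(z, z'). mink z z') ` (T_left e \<times> T_right e) = cut_plane"
proof (intro equalityI subsetI)
  fix w
  assume "w \<in> (\<lambda>(z, z'). mink z z') ` (T_left e \<times> T_right e)"
  then show "w \<in> cut_plane"
    using mink_T_left_T_right_in_cut_plane [OF e] by auto
next
  fix w
  assume "w \<in> cut_plane"
  then obtain \<zeta> where "Im \<zeta> > 0" "cos \<zeta> = - w"
    using cos_surj_upper_half_plane [of "- w"] by auto
  then have "w = (\<lambda>(z, z'). mink z z') (circle_point (\<zeta> / 2), circle_point (- \<zeta> / 2))"
    and "(circle_point (\<zeta> / 2), circle_point (- \<zeta> / 2)) \<in> T_left e \<times> T_right e"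
    using e by (simp_all add: circle_point_mem_T_left circle_point_mem_T_right mink_circle_point)
  then show "w \<in> (\<lambda>(z, z'). mink z z') ` (T_left e \<times> T_right e)"
    by (rule image_eqI)
qed

theorem proposition6:
  fixes e :: "real^3"
  assumes "e \<in> Vplus"
  shows "(\<lambda>z. - mink z bvec) ` T_right e = cut_plane
       \<and> (\<lambda>z. - mink z bvec) ` T_left e = cut_plane
       \<and> (\<lambda>(z, z'). mink z z') ` (T_left e \<times> T_right e) = cut_plane
       \<and> (\<lambda>(z, z'). mink z z') ` (T_right e \<times> T_left e) = cut_plane"
  using third_coord_image_T_right [OF assms] third_coord_image_T_left [OF assms]
    mink_image_T_left_T_right [OF assms] mink_image_swap
  by simp

end
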